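(* There is a constant $C>0$ such that the following holds. For all $0\le\delta<\delta'\le\delta_0$ and all $x,y\in\mathbb{R}^3$, \[ d_{\alpha_{\delta'}}(x,y)\le d_{\alpha_\delta}(x,y)\le d_{\alpha_{\delta'}}(x,y)+C|\delta'-\delta|. \] Consequently, for any two disjoint sets $\mathscr{P}=\{p_1,\dots,p_k\}$ and $\mathscr{N}=\{n_1,\dots,n_k\}$ of $k$ distinct points of $\mathbb{R}^3$, with $\mathscr{C}=\mathscr{P}\cup\mathscr{N}$, \[ |L(\mathscr{C},d_{\alpha_\delta})-L(\mathscr{C},d_{\alpha_{\delta'}})|\le Ck|\delta'-\delta| . \]
   Context: Let $\Omega\subset\mathbb{R}^3$ be a smooth bounded convex open set and $\omega$ a smooth bounded strictly convex open set with $\overline\omega\subset\Omega$. Fix $b\in(0,1)$. Let $\delta_0=10^{-2}\min\{1,\mathrm{dist}(\partial\omega,\partial\Omega)\}$. For $0<\delta\le\delta_0$ let $\omega_\delta=\omega+B(0,\delta)$ and $\alpha_\delta=b^2$ on $\omega_\delta$, $\alpha_\delta=1$ elsewhere. Let $\alpha_0=b^2$ on $\omega$ and $\alpha_0=1$ elsewhere. For a Borel $f:\mathbb{R}^3\to[b^2,1]$, $d_f(x,y)$ is the infimum of $\int_0^1f(\gamma(s))|\gamma'(s)|ds$ over Lipschitz arcs $\gamma$ joining $x$ and $y$. For a pseudodistance $d$, $L(\mathscr{C},d)=\min_{\sigma\in S_k}\sum_{i=1}^kd(p_i,n_{\sigma(i)})$, where $S_k$ is the set of permutations of $\{1,\dots,k\}$.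 *)

theory Defs
  imports "HOL-Analysis.Analysis" "HOL-Combinatorics.Permutations"
begin

type_synonym R3 = "real ^ 3"

text \<open>C-infinity real functions on R^3: differentiable everywhere, and all
  partial derivatives are again C-infinity (greatest fixed point).\<close>
coinductive smooth_fun :: "(R3 \<Rightarrow> real) \<Rightarrow> bool" where
  "g differentiable_on UNIV \<Longrightarrow>
   (\<And>i. smooth_fun (\<lambda>x. frechet_derivative g (at x) (axis i 1))) \<Longrightarrow> smooth_fun g"

definition smooth_boundary :: "R3 set \<Rightarrow> bool" where
  "smooth_boundary U \<longleftrightarrow>
     (\<forall>p\<in>frontier U. \<exists>V g. open V \<and> p \<in> V \<and> smooth_fun g \<and>
        U \<inter> V = {x\<in>V. g x < 0} \<and> frechet_derivative g (at p) \<noteq> (\<lambda>v. 0))"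

definition strictly_convex :: "R3 set \<Rightarrow> bool" where
  "strictly_convex U \<longleftrightarrow> convex U \<and>
     (\<forall>x\<in>closure U. \<forall>y\<in>closure U. x \<noteq> y \<longrightarrow> open_segment x y \<subseteq> U)"

definition weighted_length :: "(R3 \<Rightarrow> real) \<Rightarrow> (real \<Rightarrow> R3) \<Rightarrow> ennreal" where
  "weighted_length f \<gamma> =
     (\<integral>\<^sup>+ s\<in>{0..1}. ennreal (f (\<gamma> s) * norm (vector_derivative \<gamma> (at s))) \<partial>lebesgue)"

definition lipschitz_arcs :: "R3 \<Rightarrow> R3 \<Rightarrow> (real \<Rightarrow> R3) set" where
  "lipschitz_arcs x y = {\<gamma>. (\<exists>L. L-lipschitz_on {0..1} \<gamma>) \<and> \<gamma> 0 = x \<and> \<gamma> 1 = y}"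

definition dist_f :: "(R3 \<Rightarrow> real) \<Rightarrow> R3 \<Rightarrow> R3 \<Rightarrow> real" where
  "dist_f f x y = enn2real (INF \<gamma>\<in>lipschitz_arcs x y. weighted_length f \<gamma>)"

definition enlarged :: "R3 set \<Rightarrow> real \<Rightarrow> R3 set" where
  "enlarged \<omega> \<delta> = (if \<delta> = 0 then \<omega> else {x + v | x v. x \<in> \<omega> \<and> v \<in> ball 0 \<delta>})"

definition alpha :: "real \<Rightarrow> R3 set \<Rightarrow> real \<Rightarrow> R3 \<Rightarrow> real" where
  "alpha b \<omega> \<delta> x = (if x \<in> enlarged \<omega> \<delta> then b\<^sup>2 else 1)"

definition delta0 :: "R3 set \<Rightarrow> R3 set \<Rightarrow> real" where
  "delta0 \<Omega> \<omega> = 10 powi (-2) * min 1 (setdist (frontier \<omega>) (frontier \<Omega>))"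

text \<open>Optimal matching cost L(C,d) for P = {p_0..p_(k-1)}, N = {n_0..n_(k-1)}.\<close>
definition match_cost :: "(R3 \<Rightarrow> R3 \<Rightarrow> real) \<Rightarrow> nat \<Rightarrow> (nat \<Rightarrow> R3) \<Rightarrow> (nat \<Rightarrow> R3) \<Rightarrow> real" where
  "match_cost d k p n = Min {(\<Sum>i<k. d (p i) (n (\<sigma> i))) | \<sigma>. \<sigma> permutes {..<k}}"

end

theory Submission
  imports Defs
begin

text \<open>Since \<open>\<alpha>\<^sub>\<delta>\<^sub>' \<le> \<alpha>\<^sub>\<delta>\<close>, the first inequality is monotonicity of \<open>d\<^sub>f\<close> in \<open>f\<close>. For the
  second, fix a ball \<open>B(c,r) \<subseteq> \<omega>\<close>. By convexity the homothety with centre \<open>c\<close> and ratio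
  \<open>l = r / (r + \<delta>' - \<delta>)\<close> maps \<open>\<omega>\<^sub>\<delta>\<^sub>'\<close> into \<open>\<omega>\<^sub>\<delta>\<close> and moves points of \<open>\<omega>\<^sub>\<delta>\<^sub>'\<close>
  by at most \<open>(1 - l) R \<le> R (\<delta>' - \<delta>) / r\<close>. Given an arc \<open>\<gamma>\<close>, apply this homothety to the
  stretch of \<open>\<gamma>\<close> between its first and last visit to \<open>\<omega>\<^sub>\<delta>\<^sub>'\<close>, interpolating linearly in
  the ratio over parameter intervals of length \<open>\<tau>\<close> at both ends. The \<open>\<alpha>\<^sub>\<delta>\<close>-cost of the new
  arc exceeds the \<open>\<alpha>\<^sub>\<delta>\<^sub>'\<close>-cost of \<open>\<gamma>\<close> only on the two transitions, by at most
  \<open>2 (1 - l) R + O(\<tau>)\<close>; letting \<open>\<tau> \<rightarrow> 0\<close> gives the Lipschitz bound, and the matching costs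
  inherit it summand by summand.\<close>

lemma nn_integral_add_le:
  assumes g: "g \<in> borel_measurable M"
  shows "(\<integral>\<^sup>+x. f x + g x \<partial>M) \<le> integral\<^sup>N M f + integral\<^sup>N M g"
proof -
  have "integral\<^sup>S M h \<le> integral\<^sup>N M f + integral\<^sup>N M g"
    if h: "simple_function M h" "h \<le> (\<lambda>x. f x + g x)" "\<forall>x. h x < top" for h
  proof -
    have hm: "h \<in> borel_measurable M" using h(1) by (rule borel_measurable_simple_function)
    have "integral\<^sup>S M h \<le> (\<integral>\<^sup>+x. (h x - g x) + g x \<partial>M)"
      unfolding nn_integral_eq_simple_integral[OF h(1), symmetric]
      by (intro nn_integral_mono) (auto simp: diff_add_self_ennreal not_le)
    also have "\<dots> = (\<integral>\<^sup>+x. h x - g x \<partial>M) + integral\<^sup>N M g"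
      by (rule nn_integral_add) (use hm g in auto)
    also have "(\<integral>\<^sup>+x. h x - g x \<partial>M) \<le> integral\<^sup>N M f"
      using h(2,3) unfolding le_fun_def
      by (intro nn_integral_mono) (metis ennreal_minus_le_iff add.commute less_irrefl)
    finally show ?thesis by (simp add: add_right_mono)
  qed
  then show ?thesis
    unfolding nn_integral_def_finite[of _ "\<lambda>x. f x + g x"] by (intro SUP_least) auto
qed

text \<open>\<open>SOME D. False\<close> is the value of \<open>vector_derivative\<close> at points where no derivative exists.\<close>
lemma norm_vector_derivative_le_lipschitz:
  fixes f :: "real \<Rightarrow> 'a::real_normed_vector"
  assumes lip: "M-lipschitz_on (ball s r) f" and r: "0 < r"
  shows "norm (vector_derivative f (at s)) \<le> max M (norm (SOME D::'a. False))"
proof (cases "\<exists>D. (f has_vector_derivative D) (at s)")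
  case True
  then obtain D where D: "(f has_vector_derivative D) (at s)" by blast
  have "norm D \<le> M + e" if e: "e > 0" for e
  proof -
    from D have "((\<lambda>u. norm (f u - f s - (u - s) *\<^sub>R D) / norm (u - s)) \<longlongrightarrow> 0) (at s)"
      unfolding has_vector_derivative_def has_derivative_iff_norm by auto
    then have "eventually (\<lambda>u. norm (f u - f s - (u - s) *\<^sub>R D) / norm (u - s) < e) (at s)"
      using e by (auto dest: order_tendstoD)
    moreover have "eventually (\<lambda>u. u \<in> ball s r \<and> u \<noteq> s) (at s)"
      using r by (auto simp: eventually_at_filter eventually_nhds_metric dist_commute)
    ultimately have "eventually (\<lambda>u. u \<in> ball s r \<and> u \<noteq> s \<and>
        norm (f u - f s - (u - s) *\<^sub>R D) / norm (u - s) < e) (at s)"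
      by eventually_elim auto
    then obtain u where u: "u \<in> ball s r" "u \<noteq> s"
        "norm (f u - f s - (u - s) *\<^sub>R D) < e * \<bar>u - s\<bar>"
      using eventually_happens'[OF trivial_limit_at] by (fastforce simp: divide_less_eq)
    have "\<bar>u - s\<bar> * norm D \<le> norm (f u - f s) + norm (f u - f s - (u - s) *\<^sub>R D)"
      using norm_triangle_ineq4[of "f u - f s" "f u - f s - (u - s) *\<^sub>R D"] by simp
    also have "\<dots> \<le> M * \<bar>u - s\<bar> + e * \<bar>u - s\<bar>"
      using lipschitz_on_normD[OF lip u(1) centre_in_ball[THEN iffD2, OF r]] u(3) by simp
    finally have "\<bar>u - s\<bar> * norm D \<le> \<bar>u - s\<bar> * (M + e)" by (simp add: algebra_simps)
    then show ?thesis using u(2) by simp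
  qed
  then have "norm D \<le> M" by (rule field_le_epsilon)
  then show ?thesis using vector_derivative_at[OF D] by simp
next
  case False
  then show ?thesis by (simp add: vector_derivative_def)
qed

lemma norm_vector_derivative_homothety_le:
  fixes f g :: "real \<Rightarrow> 'a::real_normed_vector"
  assumes l: "0 < l" "l \<le> 1" and T: "open T" "s \<in> T"
    and eq: "\<And>u. u \<in> T \<Longrightarrow> g u = c + l *\<^sub>R (f u - c)"
  shows "norm (vector_derivative g (at s)) \<le> norm (vector_derivative f (at s))"
proof -
  have g_deriv: "(g has_vector_derivative l *\<^sub>R D) (at s) \<longleftrightarrow> (f has_vector_derivative D) (at s)" for D
  proof
    assume "(f has_vector_derivative D) (at s)"
    then have "((\<lambda>u. c + l *\<^sub>R (f u - c)) has_vector_derivative l *\<^sub>R D) (at s)"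
      by (auto intro!: derivative_eq_intros)
    then show "(g has_vector_derivative l *\<^sub>R D) (at s)"
      by (rule has_vector_derivative_transform_within_open[OF _ T]) (simp add: eq)
  next
    assume "(g has_vector_derivative l *\<^sub>R D) (at s)"
    then have "((\<lambda>u. c + (1/l) *\<^sub>R (g u - c)) has_vector_derivative D) (at s)"
      using l by (auto intro!: derivative_eq_intros)
    then show "(f has_vector_derivative D) (at s)"
      by (rule has_vector_derivative_transform_within_open[OF _ T]) (use l in \<open>simp add: eq\<close>)
  qed
  show ?thesis
  proof (cases "\<exists>D. (f has_vector_derivative D) (at s)")
    case True
    then obtain D where D: "(f has_vector_derivative D) (at s)" by blast
    then have "vector_derivative g (at s) = l *\<^sub>R D"
      using g_deriv by (intro vector_derivative_at) blast
    then show ?thesis using vector_derivative_at[OF D] l by (simp add: mult_left_le_one_le)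
  next
    case False
    have "\<not> (g has_vector_derivative E) (at s)" for E
      using g_deriv[of "E /\<^sub>R l"] False l by auto
    then show ?thesis using False by (simp add: vector_derivative_def)
  qed
qed

definition squeeze_factor :: "real \<Rightarrow> real \<Rightarrow> real \<Rightarrow> real \<Rightarrow> real \<Rightarrow> real" where
  "squeeze_factor l \<tau> a b s = 1 - (1 - l) * max 0 (min 1 (min ((s - a) / \<tau>) ((b - s) / \<tau>)))"

lemma squeeze_factor_bounds:
  assumes "l \<le> 1"
  shows "l \<le> squeeze_factor l \<tau> a b s" "squeeze_factor l \<tau> a b s \<le> 1"
proof -
  define m where "m = max 0 (min 1 (min ((s - a) / \<tau>) ((b - s) / \<tau>)))"
  have "0 \<le> m" "m \<le> 1" by (auto simp: m_def)
  then have "0 \<le> (1 - l) * m" "(1 - l) * m \<le> 1 - l"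
    using assms by (auto intro: mult_left_le)
  then show "l \<le> squeeze_factor l \<tau> a b s" "squeeze_factor l \<tau> a b s \<le> 1"
    by (simp_all add: squeeze_factor_def m_def[symmetric])
qed

lemma squeeze_factor_outside:
  assumes "0 < \<tau>" "s \<le> a \<or> b \<le> s"
  shows "squeeze_factor l \<tau> a b s = 1"
proof -
  have "(s - a) / \<tau> \<le> 0 \<or> (b - s) / \<tau> \<le> 0"
    using assms by (auto intro: divide_nonpos_pos)
  then show ?thesis by (auto simp: squeeze_factor_def)
qed

lemma squeeze_factor_inside:
  assumes "0 < \<tau>" "a + \<tau> \<le> s" "s \<le> b - \<tau>"
  shows "squeeze_factor l \<tau> a b s = l"
proof -
  have "1 \<le> (s - a) / \<tau>" "1 \<le> (b - s) / \<tau>"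
    using assms by (simp_all add: le_divide_eq)
  then show ?thesis by (simp add: squeeze_factor_def)
qed

lemma lipschitz_on_squeeze_factor:
  assumes "0 < \<tau>" "l \<le> 1"
  shows "((1 - l) / \<tau>)-lipschitz_on T (squeeze_factor l \<tau> a b)"
proof (rule lipschitz_onI)
  fix u s :: real
  define m where "m t = max 0 (min 1 (min ((t - a) / \<tau>) ((b - t) / \<tau>)))" for t
  have clamp: "\<bar>max 0 (min 1 x) - max 0 (min 1 y)\<bar> \<le> \<bar>x - y\<bar>" for x y :: real
    by (simp add: max_def min_def abs_if)
  have min: "\<bar>min x y - min x' y'\<bar> \<le> \<bar>x - x'\<bar>" if "\<bar>y - y'\<bar> = \<bar>x - x'\<bar>" for x y x' y' :: real
    using that unfolding min_def by argo
  have shift: "\<bar>(u - a) / \<tau> - (s - a) / \<tau>\<bar> = \<bar>u - s\<bar> / \<tau>"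
    "\<bar>(b - u) / \<tau> - (b - s) / \<tau>\<bar> = \<bar>u - s\<bar> / \<tau>"
    using assms(1) by (simp_all add: diff_divide_distrib[symmetric] abs_divide abs_minus_commute)
  have "\<bar>m u - m s\<bar> \<le> \<bar>min ((u - a) / \<tau>) ((b - u) / \<tau>) - min ((s - a) / \<tau>) ((b - s) / \<tau>)\<bar>"
    unfolding m_def by (rule clamp)
  also have "\<dots> \<le> \<bar>u - s\<bar> / \<tau>"
    using min[of "(b - u) / \<tau>" "(b - s) / \<tau>" "(u - a) / \<tau>" "(s - a) / \<tau>"] shift by simp
  finally have "\<bar>m u - m s\<bar> \<le> \<bar>u - s\<bar> / \<tau>" .
  then have "(1 - l) * \<bar>m u - m s\<bar> \<le> (1 - l) * (\<bar>u - s\<bar> / \<tau>)"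
    using assms(2) by (intro mult_left_mono) auto
  moreover have "squeeze_factor l \<tau> a b t = 1 - (1 - l) * m t" for t
    by (simp add: squeeze_factor_def m_def)
  ultimately show "dist (squeeze_factor l \<tau> a b u) (squeeze_factor l \<tau> a b s) \<le> (1 - l) / \<tau> * dist u s"
    using assms(2) by (simp add: dist_real_def abs_mult right_diff_distrib[symmetric] abs_minus_commute)
qed (use assms in auto)

definition shrink_arc :: "'a::real_vector \<Rightarrow> (real \<Rightarrow> real) \<Rightarrow> (real \<Rightarrow> 'a) \<Rightarrow> real \<Rightarrow> 'a" where
  "shrink_arc c \<mu> \<gamma> s = c + \<mu> s *\<^sub>R (\<gamma> s - c)"

lemma lipschitz_on_shrink_arc:
  fixes \<gamma> :: "real \<Rightarrow> 'a::real_normed_vector"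
  assumes \<gamma>: "L-lipschitz_on T \<gamma>" and \<mu>: "K-lipschitz_on T \<mu>"
    and \<mu>01: "\<And>s. s \<in> T \<Longrightarrow> 0 \<le> \<mu> s \<and> \<mu> s \<le> 1"
    and G: "0 \<le> G" "\<And>s. s \<in> T \<Longrightarrow> norm (\<gamma> s - c) \<le> G"
  shows "(K * G + L)-lipschitz_on T (shrink_arc c \<mu> \<gamma>)"
proof (rule lipschitz_onI)
  fix u s assume us: "u \<in> T" "s \<in> T"
  have "shrink_arc c \<mu> \<gamma> u - shrink_arc c \<mu> \<gamma> s = (\<mu> u - \<mu> s) *\<^sub>R (\<gamma> u - c) + \<mu> s *\<^sub>R (\<gamma> u - \<gamma> s)"
    by (simp add: shrink_arc_def algebra_simps)
  then have "dist (shrink_arc c \<mu> \<gamma> u) (shrink_arc c \<mu> \<gamma> s) \<le> \<bar>\<mu> u - \<mu> s\<bar> * norm (\<gamma> u - c) + \<mu> s * norm (\<gamma> u - \<gamma> s)"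
    using \<mu>01[OF us(2)] norm_triangle_ineq[of "(\<mu> u - \<mu> s) *\<^sub>R (\<gamma> u - c)" "\<mu> s *\<^sub>R (\<gamma> u - \<gamma> s)"]
    by (simp add: dist_norm)
  also have "\<dots> \<le> (K * dist u s) * G + 1 * (L * dist u s)"
    using lipschitz_onD[OF \<mu> us] lipschitz_onD[OF \<gamma> us] \<mu>01[OF us(2)] G(2)[OF us(1)] G(1)
      lipschitz_on_nonneg[OF \<mu>]
    by (intro add_mono mult_mono) (auto simp: dist_real_def dist_norm)
  finally show "dist (shrink_arc c \<mu> \<gamma> u) (shrink_arc c \<mu> \<gamma> s) \<le> (K * G + L) * dist u s"
    by (simp add: algebra_simps)
qed (use G lipschitz_on_nonneg[OF \<gamma>] lipschitz_on_nonneg[OF \<mu>] in simp)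

lemma vector_derivative_shrink_arc_eq:
  assumes "open T" "s \<in> T" "\<And>u. u \<in> T \<Longrightarrow> \<mu> u = 1"
  shows "vector_derivative (shrink_arc c \<mu> \<gamma>) (at s) = vector_derivative \<gamma> (at s)"
  using assms
  by (intro vector_derivative_cong_eq[where A=UNIV and B=UNIV]) (auto simp: shrink_arc_def eventually_nhds)

lemma shrink_arc_in_lipschitz_arcs:
  assumes \<gamma>: "\<gamma> \<in> lipschitz_arcs x y" and \<mu>: "K-lipschitz_on {0..1} \<mu>"
    and \<mu>01: "\<And>s. s \<in> {0..1} \<Longrightarrow> 0 \<le> \<mu> s \<and> \<mu> s \<le> 1" and ends: "\<mu> 0 = 1" "\<mu> 1 = 1"
  shows "shrink_arc c \<mu> \<gamma> \<in> lipschitz_arcs x y"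
proof -
  obtain L where L: "L-lipschitz_on {0..1} \<gamma>" and \<gamma>0: "\<gamma> 0 = x" and \<gamma>1: "\<gamma> 1 = y"
    using \<gamma> by (auto simp: lipschitz_arcs_def)
  have G: "norm (\<gamma> s - c) \<le> norm (x - c) + L" if "s \<in> {0..1}" for s
  proof -
    have "norm (\<gamma> s - c) \<le> norm (\<gamma> s - \<gamma> 0) + norm (\<gamma> 0 - c)"
      using norm_triangle_ineq[of "\<gamma> s - \<gamma> 0" "\<gamma> 0 - c"] by simp
    also have "norm (\<gamma> s - \<gamma> 0) \<le> L"
      using lipschitz_on_normD[OF L that, of 0] that lipschitz_on_nonneg[OF L]
      by (auto intro: order_trans mult_left_le)
    finally show ?thesis using \<gamma>0 by simp
  qed
  have "(K * (norm (x - c) + L) + L)-lipschitz_on {0..1} (shrink_arc c \<mu> \<gamma>)"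
    using lipschitz_on_nonneg[OF L] by (intro lipschitz_on_shrink_arc[OF L \<mu> \<mu>01]) (auto intro: G)
  then show ?thesis using ends \<gamma>0 \<gamma>1 by (auto simp: lipschitz_arcs_def shrink_arc_def)
qed

lemma norm_vector_derivative_shrink_arc_le:
  fixes \<gamma> :: "real \<Rightarrow> 'a::real_normed_vector"
  assumes \<gamma>: "L-lipschitz_on {0..1} \<gamma>" and l: "0 < l" "l \<le> 1" and \<tau>: "0 < \<tau>"
    and s: "s \<in> {0<..<1}" and t: "t \<in> {0..1}" "\<bar>s - t\<bar> \<le> 2 * \<tau>" "norm (\<gamma> t - c) \<le> R0"
  shows "norm (vector_derivative (shrink_arc c (squeeze_factor l \<tau> a b) \<gamma>) (at s))
    \<le> (1 - l) / \<tau> * (R0 + 3 * L * \<tau>) + L + norm (SOME D::'a. False)"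
proof -
  define r where "r = min (min s (1 - s)) \<tau>"
  have r: "0 < r" "ball s r \<subseteq> {0..1}"
    using s \<tau> by (auto simp: r_def dist_real_def)
  have L0: "0 \<le> L" using \<gamma> by (rule lipschitz_on_nonneg)
  have G: "norm (\<gamma> u - c) \<le> R0 + 3 * L * \<tau>" if "u \<in> ball s r" for u
  proof -
    have u: "u \<in> {0..1}" "\<bar>u - t\<bar> \<le> 3 * \<tau>"
      using that r t(2) by (auto simp: r_def dist_real_def)
    have "norm (\<gamma> u - c) \<le> norm (\<gamma> t - c) + norm (\<gamma> u - \<gamma> t)"
      using norm_triangle_sub[of "\<gamma> u - c" "\<gamma> t - c"] by simp
    also have "norm (\<gamma> u - \<gamma> t) \<le> L * (3 * \<tau>)"
      using lipschitz_on_normD[OF \<gamma> u(1) t(1)] u(2) L0 by (auto intro: order_trans mult_left_mono)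
    finally show ?thesis using t(3) by simp
  qed
  have "0 \<le> R0" using t(3) by (rule order_trans[OF norm_ge_zero])
  then have "((1 - l) / \<tau> * (R0 + 3 * L * \<tau>) + L)-lipschitz_on (ball s r) (shrink_arc c (squeeze_factor l \<tau> a b) \<gamma>)"
    using l \<tau> L0 squeeze_factor_bounds[of l]
    by (intro lipschitz_on_shrink_arc lipschitz_on_squeeze_factor lipschitz_on_subset[OF \<gamma> r(2)] G)
      (auto intro: order_trans[of 0 l])
  moreover have "0 \<le> (1 - l) / \<tau> * (R0 + 3 * L * \<tau>) + L"
    using \<open>0 \<le> R0\<close> l \<tau> L0 by simp
  ultimately show ?thesis
    using norm_vector_derivative_le_lipschitz[OF _ r(1)] by (smt (verit) norm_ge_zero)
qed

lemma shrink_arc_integrand_le: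
  fixes \<gamma> :: "real \<Rightarrow> 'a::real_normed_vector" and f f' :: "'a \<Rightarrow> real"
  assumes \<gamma>: "L-lipschitz_on {0..1} \<gamma>" and l: "0 < l" "l \<le> 1" and \<tau>: "0 < \<tau>"
    and f: "\<And>z. 0 \<le> f z" "\<And>z. f z \<le> 1" and f': "\<And>z. 0 \<le> f' z"
    and outside: "\<And>z. z \<notin> W \<Longrightarrow> f z \<le> f' z"
    and homothety: "\<And>z. f (c + l *\<^sub>R (z - c)) \<le> f' z"
    and bounded: "\<And>z. z \<in> W \<Longrightarrow> norm (z - c) \<le> R0"
    and window: "\<And>t. t \<in> {0..1} \<Longrightarrow> \<gamma> t \<in> W \<Longrightarrow> t \<in> {a..b}"
    and near: "\<And>t. t \<in> {a..a+\<tau>} \<union> {b-\<tau>..b} \<Longrightarrow> \<exists>t'\<in>{0..1}. \<bar>t - t'\<bar> \<le> 2 * \<tau> \<and> \<gamma> t' \<in> W"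
    and s: "s \<in> {0<..<1}"
  defines "\<eta> \<equiv> shrink_arc c (squeeze_factor l \<tau> a b) \<gamma>"
    and "K \<equiv> (1 - l) / \<tau> * (R0 + 3 * L * \<tau>) + L + norm (SOME D::'a. False)"
  shows "f (\<eta> s) * norm (vector_derivative \<eta> (at s))
    \<le> f' (\<gamma> s) * norm (vector_derivative \<gamma> (at s)) + K * (indicator {a..a+\<tau>} s + indicator {b-\<tau>..b} s)"
proof -
  have "0 \<le> R0"
    using near[of a] \<tau> bounded by (auto intro: order_trans[OF norm_ge_zero])
  then have "0 \<le> K"
    using l \<tau> lipschitz_on_nonneg[OF \<gamma>] by (simp add: K_def)
  then have extra: "0 \<le> K * (indicator {a..a+\<tau>} s + indicator {b-\<tau>..b} s)"
    by simp
  consider (off) "s \<notin> {a..b}" | (middle) "s \<in> {a+\<tau><..<b-\<tau>}" | (transition) "s \<in> {a..a+\<tau>} \<union> {b-\<tau>..b}"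
    by force
  then show ?thesis
  proof cases
    case off
    have unit: "squeeze_factor l \<tau> a b u = 1" if "u \<in> - {a..b}" for u
      using that \<tau> by (intro squeeze_factor_outside) auto
    have "vector_derivative \<eta> (at s) = vector_derivative \<gamma> (at s)"
      unfolding \<eta>_def using off by (intro vector_derivative_shrink_arc_eq[of "- {a..b}"] unit) auto
    moreover have "\<eta> s = \<gamma> s"
      using unit off by (simp add: \<eta>_def shrink_arc_def)
    moreover have "\<gamma> s \<notin> W"
      using off s window[of s] by auto
    then have "f (\<gamma> s) \<le> f' (\<gamma> s)"
      by (rule outside)
    ultimately show ?thesis
      using extra mult_right_mono[of "f (\<gamma> s)" "f' (\<gamma> s)" "norm (vector_derivative \<gamma> (at s))"] by simp
  next
    case middle
    have \<eta>_mid: "\<eta> u = c + l *\<^sub>R (\<gamma> u - c)" if "u \<in> {a+\<tau><..<b-\<tau>}" for u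
      using that \<tau> by (simp add: \<eta>_def shrink_arc_def squeeze_factor_inside)
    have "norm (vector_derivative \<eta> (at s)) \<le> norm (vector_derivative \<gamma> (at s))"
      using middle by (intro norm_vector_derivative_homothety_le[OF l, of "{a+\<tau><..<b-\<tau>}" _ _ c] \<eta>_mid) auto
    moreover have "f (\<eta> s) \<le> f' (\<gamma> s)"
      using \<eta>_mid[OF middle] homothety by simp
    ultimately have "f (\<eta> s) * norm (vector_derivative \<eta> (at s)) \<le> f' (\<gamma> s) * norm (vector_derivative \<gamma> (at s))"
      using f f' by (intro mult_mono) auto
    then show ?thesis using extra by linarith
  next
    case transition
    obtain t where t: "t \<in> {0..1}" "\<bar>s - t\<bar> \<le> 2 * \<tau>" "\<gamma> t \<in> W"
      using near[OF transition] by blast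
    have "f (\<eta> s) * norm (vector_derivative \<eta> (at s)) \<le> norm (vector_derivative \<eta> (at s))"
      using f by (intro mult_left_le_one_le) auto
    also have "\<dots> \<le> K"
      unfolding \<eta>_def K_def using bounded[OF t(3)]
      by (intro norm_vector_derivative_shrink_arc_le[OF \<gamma> l \<tau> s t(1,2)])
    also have "\<dots> \<le> K * (indicator {a..a+\<tau>} s + indicator {b-\<tau>..b} s)"
      using transition \<open>0 \<le> K\<close> mult_left_mono[of 1 "indicator {a..a+\<tau>} s + indicator {b-\<tau>..b} s" K]
      by (auto split: split_indicator)
    also have "\<dots> \<le> f' (\<gamma> s) * norm (vector_derivative \<gamma> (at s)) + \<dots>"
      using f' by simp
    finally show ?thesis .
  qed
qed

lemma margin_intervalE:
  fixes S :: "real set"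
  assumes S: "S \<noteq> {}" "S \<subseteq> {0..1}" and \<tau>: "0 < \<tau>"
  obtains a b where "0 \<le> a" "b \<le> 1" "S \<subseteq> {a..b}"
    "\<And>t. t \<in> {a..a+\<tau>} \<union> {b-\<tau>..b} \<Longrightarrow> \<exists>t'\<in>S. \<bar>t - t'\<bar> \<le> 2 * \<tau>"
proof -
  have bdd: "bdd_below S" "bdd_above S"
    using S(2) by (meson atLeastAtMost_iff bdd_belowI subsetD, meson atLeastAtMost_iff bdd_aboveI subsetD)
  have bounds: "0 \<le> Inf S" "Inf S \<le> Sup S" "Sup S \<le> 1"
    using S cInf_le_cSup[OF S(1) bdd(2,1)] by (auto intro!: cInf_greatest cSup_least)
  obtain s1 where s1: "s1 \<in> S" "s1 < Inf S + \<tau>"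
    using cInf_less_iff[OF S(1) bdd(1), of "Inf S + \<tau>"] \<tau> by auto
  obtain s2 where s2: "s2 \<in> S" "Sup S - \<tau> < s2"
    using less_cSup_iff[OF S(1) bdd(2), of "Sup S - \<tau>"] \<tau> by auto
  show ?thesis
  proof (rule that[of "max 0 (Inf S - \<tau>)" "min 1 (Sup S + \<tau>)"])
    show "S \<subseteq> {max 0 (Inf S - \<tau>)..min 1 (Sup S + \<tau>)}"
      using S(2) cInf_lower[OF _ bdd(1)] cSup_upper[OF _ bdd(2)] \<tau> by fastforce
    fix t assume t: "t \<in> {max 0 (Inf S - \<tau>)..max 0 (Inf S - \<tau>) + \<tau>} \<union> {min 1 (Sup S + \<tau>) - \<tau>..min 1 (Sup S + \<tau>)}"
    show "\<exists>t'\<in>S. \<bar>t - t'\<bar> \<le> 2 * \<tau>"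
    proof (cases "t \<le> max 0 (Inf S - \<tau>) + \<tau>")
      case True
      then show ?thesis
        using t s1 cInf_lower[OF s1(1) bdd(1)] bounds
        by (intro bexI[of _ s1]) (auto simp: abs_le_iff max_def min_def split: if_splits)
    next
      case False
      then show ?thesis
        using t s2 cSup_upper[OF s2(1) bdd(2)] bounds
        by (intro bexI[of _ s2]) (auto simp: abs_le_iff max_def min_def split: if_splits)
    qed
  qed (use bounds in auto)
qed

lemma weighted_length_le_add_intervals:
  fixes \<eta> \<gamma> :: "real \<Rightarrow> R3" and f f' :: "R3 \<Rightarrow> real"
  assumes f': "\<And>z. 0 \<le> f' z" and K: "0 \<le> K" and ab: "a \<le> a'" "b \<le> b'"
    and pointwise: "\<And>s. s \<in> {0<..<1} \<Longrightarrow> f (\<eta> s) * norm (vector_derivative \<eta> (at s))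
      \<le> f' (\<gamma> s) * norm (vector_derivative \<gamma> (at s)) + K * (indicator {a..a'} s + indicator {b..b'} s)"
  shows "weighted_length f \<eta> \<le> weighted_length f' \<gamma> + ennreal (K * ((a' - a) + (b' - b)))"
proof -
  define g :: "real \<Rightarrow> ennreal" where
    "g s = ennreal K * indicator {a..a'} s + ennreal K * indicator {b..b'} s" for s
  have "AE s in lebesgue. s \<noteq> 0 \<and> s \<noteq> (1::real)"
    using AE_lborel_singleton[of 0] AE_lborel_singleton[of 1] by (auto intro: AE_completion)
  moreover have "ennreal (f (\<eta> s) * norm (vector_derivative \<eta> (at s))) * indicator {0..1} s
      \<le> ennreal (f' (\<gamma> s) * norm (vector_derivative \<gamma> (at s))) * indicator {0..1} s + g s"
    if "s \<noteq> 0 \<and> s \<noteq> 1" for s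
    using that pointwise[of s] f'[of "\<gamma> s"] K
    by (auto simp: g_def ennreal_plus[symmetric] ennreal_mult[symmetric] split: split_indicator
        simp del: ennreal_plus intro!: ennreal_leI)
  ultimately have "weighted_length f \<eta>
      \<le> (\<integral>\<^sup>+s. ennreal (f' (\<gamma> s) * norm (vector_derivative \<gamma> (at s))) * indicator {0..1} s + g s \<partial>lebesgue)"
    unfolding weighted_length_def by (intro nn_integral_mono_AE) (auto elim: eventually_mono)
  also have "\<dots> \<le> weighted_length f' \<gamma> + integral\<^sup>N lebesgue g"
    unfolding weighted_length_def
    by (rule nn_integral_add_le) (auto simp: g_def intro: measurable_completion)
  also have "integral\<^sup>N lebesgue g = ennreal K * emeasure lborel {a..a'} + ennreal K * emeasure lborel {b..b'}"
    unfolding g_def nn_integral_completion by (subst nn_integral_add) (auto simp: nn_integral_cmult_indicator)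
  also have "\<dots> = ennreal (K * ((a' - a) + (b' - b)))"
    using K ab by (simp add: ennreal_mult[symmetric] ennreal_plus[symmetric] distrib_left del: ennreal_plus)
  finally show ?thesis .
qed

lemma shrink_arc_weighted_length_le:
  fixes f f' :: "R3 \<Rightarrow> real"
  assumes \<gamma>: "\<gamma> \<in> lipschitz_arcs x y" and L: "L-lipschitz_on {0..1} \<gamma>"
    and l: "0 < l" "l \<le> 1" and \<tau>: "0 < \<tau>"
    and f: "\<And>z. 0 \<le> f z" "\<And>z. f z \<le> 1" and f': "\<And>z. 0 \<le> f' z"
    and outside: "\<And>z. z \<notin> W \<Longrightarrow> f z \<le> f' z"
    and homothety: "\<And>z. f (c + l *\<^sub>R (z - c)) \<le> f' z"
    and bounded: "\<And>z. z \<in> W \<Longrightarrow> norm (z - c) \<le> R0"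
    and ab: "0 \<le> a" "b \<le> 1"
    and window: "\<And>t. t \<in> {0..1} \<Longrightarrow> \<gamma> t \<in> W \<Longrightarrow> t \<in> {a..b}"
    and near: "\<And>t. t \<in> {a..a+\<tau>} \<union> {b-\<tau>..b} \<Longrightarrow> \<exists>t'\<in>{0..1}. \<bar>t - t'\<bar> \<le> 2 * \<tau> \<and> \<gamma> t' \<in> W"
  defines "\<eta> \<equiv> shrink_arc c (squeeze_factor l \<tau> a b) \<gamma>"
    and "K \<equiv> (1 - l) / \<tau> * (R0 + 3 * L * \<tau>) + L + norm (SOME D::R3. False)"
  shows "\<eta> \<in> lipschitz_arcs x y"
    and "weighted_length f \<eta> \<le> weighted_length f' \<gamma> + ennreal (K * (2 * \<tau>))"
proof -
  show "\<eta> \<in> lipschitz_arcs x y"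
    unfolding \<eta>_def using \<tau> l squeeze_factor_bounds[OF l(2)]
      order_trans[OF less_imp_le[OF l(1)] squeeze_factor_bounds(1)[OF l(2)]]
    by (intro shrink_arc_in_lipschitz_arcs[OF \<gamma> lipschitz_on_squeeze_factor])
      (auto intro!: squeeze_factor_outside simp: ab)
  have "0 \<le> R0"
    using near[of a] \<tau> bounded by (auto intro: order_trans[OF norm_ge_zero])
  then have "weighted_length f \<eta> \<le> weighted_length f' \<gamma> + ennreal (K * ((a + \<tau> - a) + (b - (b - \<tau>))))"
    using \<tau> l lipschitz_on_nonneg[OF L] f' unfolding \<eta>_def K_def
    by (intro weighted_length_le_add_intervals shrink_arc_integrand_le[where f=f and f'=f' and W=W and c=c,
          OF L l \<tau> f f' outside homothety bounded window near])
      auto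
  then show "weighted_length f \<eta> \<le> weighted_length f' \<gamma> + ennreal (K * (2 * \<tau>))"
    by simp
qed

lemma exists_shrunk_arc:
  fixes f f' :: "R3 \<Rightarrow> real"
  assumes f: "\<And>z. 0 \<le> f z" "\<And>z. f z \<le> 1" and f': "\<And>z. 0 \<le> f' z"
    and outside: "\<And>z. z \<notin> W \<Longrightarrow> f z \<le> f' z"
    and homothety: "\<And>z. f (c + l *\<^sub>R (z - c)) \<le> f' z"
    and bounded: "\<And>z. z \<in> W \<Longrightarrow> norm (z - c) \<le> R0"
    and l: "0 < l" "l \<le> 1" and \<gamma>: "\<gamma> \<in> lipschitz_arcs x y" and e: "0 < e"
  shows "\<exists>\<eta>\<in>lipschitz_arcs x y. weighted_length f \<eta> \<le> weighted_length f' \<gamma> + ennreal (2 * (1 - l) * R0 + e)"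
proof -
  obtain L where L: "L-lipschitz_on {0..1} \<gamma>"
    using \<gamma> by (auto simp: lipschitz_arcs_def)
  have L0: "0 \<le> L" using L by (rule lipschitz_on_nonneg)
  define S where "S = {t \<in> {0..1}. \<gamma> t \<in> W}"
  show ?thesis
  proof (cases "S = {}")
    case True
    then have "weighted_length f \<gamma> \<le> weighted_length f' \<gamma> + ennreal (0 * ((0 - 0) + (0 - 0)))"
      using outside f' by (intro weighted_length_le_add_intervals) (auto simp: S_def intro: mult_right_mono)
    then show ?thesis using \<gamma> by (intro bexI[of _ \<gamma>]) (auto intro: add_increasing2)
  next
    case False
    define nd where "nd = norm (SOME D::R3. False)"
    define \<tau> where "\<tau> = e / (8 * L + 2 * nd + 1)"
    have den: "0 < 8 * L + 2 * nd + 1" using L0 norm_ge_zero[of "SOME D::R3. False"] unfolding nd_def by linarith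
    then have \<tau>: "0 < \<tau>" using e by (simp add: \<tau>_def)
    have "S \<subseteq> {0..1}" by (auto simp: S_def)
    then obtain a b where ab: "0 \<le> a" "b \<le> 1" "S \<subseteq> {a..b}"
      and near: "\<And>t. t \<in> {a..a+\<tau>} \<union> {b-\<tau>..b} \<Longrightarrow> \<exists>t'\<in>S. \<bar>t - t'\<bar> \<le> 2 * \<tau>"
      using margin_intervalE[OF False _ \<tau>] by blast
    have window: "t \<in> {a..b}" if "t \<in> {0..1}" "\<gamma> t \<in> W" for t
      using that ab(3) by (auto simp: S_def)
    have near': "\<exists>t'\<in>{0..1}. \<bar>t - t'\<bar> \<le> 2 * \<tau> \<and> \<gamma> t' \<in> W" if "t \<in> {a..a+\<tau>} \<union> {b-\<tau>..b}" for t
      using near[OF that] by (auto simp: S_def)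
    note shrunk = shrink_arc_weighted_length_le[where f=f and f'=f' and W=W and c=c,
        OF \<gamma> L l \<tau> f f' outside homothety bounded ab(1,2) window near']
    have "((1 - l) / \<tau> * (R0 + 3 * L * \<tau>) + L + nd) * (2 * \<tau>)
        = 2 * (1 - l) * R0 + \<tau> * (6 * (1 - l) * L + 2 * L + 2 * nd)"
      using \<tau> by (simp add: field_simps)
    also have "\<tau> * (6 * (1 - l) * L + 2 * L + 2 * nd) \<le> \<tau> * (8 * L + 2 * nd + 1)"
      using \<tau> l L0 mult_nonneg_nonneg[of l L] by (intro mult_left_mono) (simp_all add: algebra_simps)
    also have "\<tau> * (8 * L + 2 * nd + 1) = e"
      using den by (simp add: \<tau>_def)
    finally have "((1 - l) / \<tau> * (R0 + 3 * L * \<tau>) + L + nd) * (2 * \<tau>) \<le> 2 * (1 - l) * R0 + e"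
      by simp
    then have "weighted_length f' \<gamma> + ennreal (((1 - l) / \<tau> * (R0 + 3 * L * \<tau>) + L + nd) * (2 * \<tau>))
        \<le> weighted_length f' \<gamma> + ennreal (2 * (1 - l) * R0 + e)"
      by (intro add_left_mono ennreal_leI)
    then show ?thesis
      using shrunk unfolding nd_def by (blast intro: order_trans)
  qed
qed

lemma INF_weighted_length_le_norm:
  fixes f :: "R3 \<Rightarrow> real"
  assumes "\<And>z. 0 \<le> f z" "\<And>z. f z \<le> 1"
  shows "(INF \<gamma>\<in>lipschitz_arcs x y. weighted_length f \<gamma>) \<le> ennreal (norm (y - x))"
proof -
  define \<gamma> where "\<gamma> s = x + s *\<^sub>R (y - x)" for s :: real
  have "(norm (y - x))-lipschitz_on {0..1} \<gamma>"
  proof (rule lipschitz_onI)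
    fix u s :: real
    have "\<gamma> u - \<gamma> s = (u - s) *\<^sub>R (y - x)" by (simp add: \<gamma>_def algebra_simps)
    then show "dist (\<gamma> u) (\<gamma> s) \<le> norm (y - x) * dist u s" by (simp add: dist_norm dist_real_def)
  qed simp
  then have "\<gamma> \<in> lipschitz_arcs x y" by (auto simp: lipschitz_arcs_def \<gamma>_def)
  then have "(INF \<gamma>\<in>lipschitz_arcs x y. weighted_length f \<gamma>) \<le> weighted_length f \<gamma>" by (rule INF_lower)
  also have "\<dots> \<le> (\<integral>\<^sup>+s. ennreal (norm (y - x)) * indicator {0..1::real} s \<partial>lebesgue)"
    unfolding weighted_length_def
  proof (intro nn_integral_mono)
    fix s :: real
    have "(\<gamma> has_vector_derivative (y - x)) (at s)" unfolding \<gamma>_def by (auto intro!: derivative_eq_intros)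
    then have "vector_derivative \<gamma> (at s) = y - x" by (rule vector_derivative_at)
    then show "ennreal (f (\<gamma> s) * norm (vector_derivative \<gamma> (at s))) * indicator {0..1} s
        \<le> ennreal (norm (y - x)) * indicator {0..1} s"
      using assms by (auto intro!: ennreal_leI mult_left_le_one_le split: split_indicator)
  qed
  also have "\<dots> = ennreal (norm (y - x))"
    by (simp add: nn_integral_completion nn_integral_cmult_indicator)
  finally show ?thesis .
qed

lemma dist_f_mono:
  fixes f g :: "R3 \<Rightarrow> real"
  assumes "\<And>z. f z \<le> g z" "\<And>z. 0 \<le> f z" "\<And>z. g z \<le> 1"
  shows "dist_f f x y \<le> dist_f g x y"
proof -
  have "(INF \<gamma>\<in>lipschitz_arcs x y. weighted_length f \<gamma>) \<le> (INF \<gamma>\<in>lipschitz_arcs x y. weighted_length g \<gamma>)"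
    unfolding weighted_length_def
    by (intro INF_mono bexI nn_integral_mono mult_right_mono ennreal_leI) (auto intro: assms(1) mult_right_mono)
  moreover have "0 \<le> g z" for z using assms(1,2)[of z] by linarith
  then have "(INF \<gamma>\<in>lipschitz_arcs x y. weighted_length g \<gamma>) < top"
    using INF_weighted_length_le_norm[of g x y] assms(3) by (simp add: order_le_less_trans)
  ultimately show ?thesis unfolding dist_f_def by (rule enn2real_mono)
qed

lemma dist_f_le_homothety:
  fixes f f' :: "R3 \<Rightarrow> real"
  assumes f: "\<And>z. 0 \<le> f z" "\<And>z. f z \<le> 1" and f': "\<And>z. 0 \<le> f' z" "\<And>z. f' z \<le> 1"
    and outside: "\<And>z. z \<notin> W \<Longrightarrow> f z \<le> f' z"
    and homothety: "\<And>z. f (c + l *\<^sub>R (z - c)) \<le> f' z"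
    and bounded: "\<And>z. z \<in> W \<Longrightarrow> norm (z - c) \<le> R0" and R0: "0 \<le> R0"
    and l: "0 < l" "l \<le> 1"
  shows "dist_f f x y \<le> dist_f f' x y + 2 * (1 - l) * R0"
proof -
  define D where "D g = (INF \<gamma>\<in>lipschitz_arcs x y. weighted_length g \<gamma>)" for g
  have finite: "D f' < top"
    using INF_weighted_length_le_norm[of f' x y] f' by (simp add: D_def order_le_less_trans)
  have "D f \<le> D f' + ennreal (2 * (1 - l) * R0)"
  proof (rule ennreal_le_epsilon)
    fix e :: real assume e: "0 < e"
    have "D f' < D f' + ennreal (e / 2)" using finite e by (cases "D f'") auto
    then obtain \<gamma> where \<gamma>: "\<gamma> \<in> lipschitz_arcs x y" "weighted_length f' \<gamma> < D f' + ennreal (e / 2)"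
      unfolding D_def by (auto simp: INF_less_iff)
    obtain \<eta> where \<eta>: "\<eta> \<in> lipschitz_arcs x y"
      "weighted_length f \<eta> \<le> weighted_length f' \<gamma> + ennreal (2 * (1 - l) * R0 + e / 2)"
      using exists_shrunk_arc[where f=f and f'=f' and c=c and W=W, OF f f'(1) outside homothety bounded l \<gamma>(1), of "e / 2"] e by auto
    have "D f \<le> weighted_length f \<eta>" unfolding D_def using \<eta>(1) by (rule INF_lower)
    also have "\<dots> \<le> D f' + ennreal (e / 2) + ennreal (2 * (1 - l) * R0 + e / 2)"
      using \<eta>(2) \<gamma>(2) by (auto intro: order_trans add_right_mono)
    also have "\<dots> = D f' + ennreal (2 * (1 - l) * R0) + ennreal e"
      using l R0 e by (simp add: ennreal_plus[symmetric] add.assoc del: ennreal_plus)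
    finally show "D f \<le> D f' + ennreal (2 * (1 - l) * R0) + ennreal e" .
  qed
  then have "enn2real (D f) \<le> enn2real (D f' + ennreal (2 * (1 - l) * R0))"
    using finite by (intro enn2real_mono) auto
  also have "\<dots> = enn2real (D f') + 2 * (1 - l) * R0"
    using finite l R0 by (subst enn2real_plus) auto
  finally show ?thesis unfolding dist_f_def D_def .
qed

lemma enlarged_mono:
  assumes "0 \<le> \<delta>" "\<delta> \<le> \<delta>'"
  shows "enlarged \<omega> \<delta> \<subseteq> enlarged \<omega> \<delta>'"
proof
  fix z assume z: "z \<in> enlarged \<omega> \<delta>"
  show "z \<in> enlarged \<omega> \<delta>'"
  proof (cases "\<delta> = 0")
    case True
    then have "z \<in> \<omega>" "z + 0 = z" using z by (simp_all add: enlarged_def)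
    then show ?thesis using True assms unfolding enlarged_def by (cases "\<delta>' = 0") force+
  next
    case False
    then obtain w v where wv: "z = w + v" "w \<in> \<omega>" "norm v < \<delta>"
      using z by (auto simp: enlarged_def)
    then have "v \<in> ball 0 \<delta>'" "\<delta>' \<noteq> 0" using False assms by auto
    then have "z \<in> {x + v | x v. x \<in> \<omega> \<and> v \<in> ball 0 \<delta>'}" using wv by blast
    then show ?thesis using \<open>\<delta>' \<noteq> 0\<close> by (simp add: enlarged_def)
  qed
qed

lemma alpha_bounds:
  assumes "\<bar>b\<bar> \<le> 1"
  shows "0 \<le> alpha b \<omega> \<delta> z" "alpha b \<omega> \<delta> z \<le> 1"
  using assms by (simp_all add: alpha_def abs_square_le_1)

lemma alpha_antimono:
  assumes "\<bar>b\<bar> \<le> 1" "0 \<le> \<delta>" "\<delta> \<le> \<delta>'"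
  shows "alpha b \<omega> \<delta>' z \<le> alpha b \<omega> \<delta> z"
  using assms enlarged_mono[OF assms(2,3), of \<omega>] by (auto simp: alpha_def abs_square_le_1)

text \<open>For \<open>z = w + v\<close> with \<open>w \<in> \<omega>\<close>, \<open>|v| < \<delta>'\<close>, split \<open>l v = u\<^sub>1 + u\<^sub>2\<close> with
  \<open>u\<^sub>1 = (l \<delta> / \<delta>') v \<in> B(0,\<delta>)\<close>; the rest \<open>u\<^sub>2\<close> is absorbed into the convex combination
  of \<open>w\<close> with \<open>q = c + u\<^sub>2 / (1 - l)\<close>, which lies in \<open>B(c,r)\<close>.\<close>
lemma homothety_mem_enlarged:
  assumes cvx: "convex \<omega>" and r: "0 < r" "ball c r \<subseteq> \<omega>" and \<delta>: "0 \<le> \<delta>" "\<delta> < \<delta>'"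
    and z: "z \<in> enlarged \<omega> \<delta>'"
  shows "c + (r / (r + (\<delta>' - \<delta>))) *\<^sub>R (z - c) \<in> enlarged \<omega> \<delta>"
proof -
  define \<epsilon> where "\<epsilon> = \<delta>' - \<delta>"
  define l where "l = r / (r + \<epsilon>)"
  have \<epsilon>: "0 < \<epsilon>" "0 < \<delta>'" using \<delta> by (auto simp: \<epsilon>_def)
  obtain w v where wv: "z = w + v" "w \<in> \<omega>" "norm v < \<delta>'"
    using z \<epsilon>(2) by (auto simp: enlarged_def)
  have l: "0 < l" "l < 1" using r \<epsilon> by (auto simp: l_def)
  have "1 - l = \<epsilon> / (r + \<epsilon>)" using r \<epsilon> by (simp add: l_def field_simps)
  then have ratio: "l / (1 - l) = r / \<epsilon>" using r \<epsilon> by (simp add: l_def)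
  define u1 where "u1 = (l * \<delta> / \<delta>') *\<^sub>R v"
  define u2 where "u2 = (l * \<epsilon> / \<delta>') *\<^sub>R v"
  define q where "q = c + (1 / (1 - l)) *\<^sub>R u2"
  have "dist c q = (l / (1 - l)) * (\<epsilon> / \<delta>') * norm v"
    using l \<epsilon> by (simp add: q_def u2_def dist_norm abs_mult)
  also have "\<dots> = r * (norm v / \<delta>')" using \<epsilon> by (simp add: ratio)
  also have "\<dots> < r" using r wv(3) \<epsilon>(2) by (simp add: divide_less_eq)
  finally have q: "q \<in> \<omega>" using r(2) by auto
  have p: "l *\<^sub>R w + (1 - l) *\<^sub>R q \<in> \<omega>"
    using l by (intro convexD[OF cvx wv(2) q]) auto
  have coeff: "l * \<delta> / \<delta>' + l * \<epsilon> / \<delta>' = l" using \<epsilon>(2) by (simp add: \<epsilon>_def field_simps)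
  have u12: "u1 + u2 = l *\<^sub>R v"
    unfolding u1_def u2_def scaleR_add_left[symmetric] coeff by (rule refl)
  have q: "(1 - l) *\<^sub>R q = (1 - l) *\<^sub>R c + u2"
    using l by (simp add: q_def scaleR_add_right)
  have "c + l *\<^sub>R (z - c) = l *\<^sub>R w + (1 - l) *\<^sub>R c + (u1 + u2)"
    unfolding wv(1) u12 by (simp add: algebra_simps)
  also have "\<dots> = (l *\<^sub>R w + (1 - l) *\<^sub>R q) + u1" by (simp only: q add_ac)
  finally have eq: "c + l *\<^sub>R (z - c) = (l *\<^sub>R w + (1 - l) *\<^sub>R q) + u1" .
  have "(l *\<^sub>R w + (1 - l) *\<^sub>R q) + u1 \<in> enlarged \<omega> \<delta>"
  proof (cases "\<delta> = 0")
    case True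
    then show ?thesis using p by (simp add: enlarged_def u1_def)
  next
    case False
    have "norm u1 = l * (\<delta> / \<delta>' * norm v)"
      using l \<delta> \<epsilon>(2) by (simp add: u1_def abs_mult)
    also have "\<dots> \<le> \<delta> / \<delta>' * norm v"
      using l \<delta> \<epsilon>(2) by (intro mult_left_le_one_le) auto
    also have "\<dots> < \<delta>" using wv(3) \<delta> False \<epsilon>(2) by (simp add: divide_less_eq mult.commute)
    finally have "(l *\<^sub>R w + (1 - l) *\<^sub>R q) + u1 \<in> {x + v | x v. x \<in> \<omega> \<and> v \<in> ball 0 \<delta>}"
      using p by auto
    then show ?thesis using False by (simp add: enlarged_def)
  qed
  then show ?thesis unfolding l_def \<epsilon>_def eq[unfolded l_def \<epsilon>_def] .
qed

lemma dist_f_alpha_le: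
  assumes \<omega>: "convex \<omega>" "0 < r" "ball c r \<subseteq> \<omega>" "\<And>w. w \<in> \<omega> \<Longrightarrow> norm (w - c) \<le> B"
    and b: "\<bar>b\<bar> \<le> 1" and \<delta>: "0 \<le> \<delta>" "\<delta> < \<delta>'"
  shows "dist_f (alpha b \<omega> \<delta>) x y \<le> dist_f (alpha b \<omega> \<delta>') x y + 2 * (B + \<delta>') / r * (\<delta>' - \<delta>)"
proof -
  define l where "l = r / (r + (\<delta>' - \<delta>))"
  have l: "0 < l" "l \<le> 1" using \<omega>(2) \<delta> by (auto simp: l_def)
  have "0 \<le> B" using \<omega>(4)[OF subsetD[OF \<omega>(3) centre_in_ball[THEN iffD2, OF \<omega>(2)]]] by simp
  have "dist_f (alpha b \<omega> \<delta>) x y \<le> dist_f (alpha b \<omega> \<delta>') x y + 2 * (1 - l) * (B + \<delta>')"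
  proof (rule dist_f_le_homothety[where W="enlarged \<omega> \<delta>'" and c=c])
    fix z
    show "alpha b \<omega> \<delta> (c + l *\<^sub>R (z - c)) \<le> alpha b \<omega> \<delta>' z"
      using homothety_mem_enlarged[OF \<omega>(1-3) \<delta>, of z] alpha_bounds[OF b]
      by (auto simp: alpha_def l_def)
  next
    fix z assume "z \<in> enlarged \<omega> \<delta>'"
    then obtain w v where "z = w + v" "w \<in> \<omega>" "norm v < \<delta>'"
      using \<delta> by (auto simp: enlarged_def)
    then show "norm (z - c) \<le> B + \<delta>'"
      using \<omega>(4) norm_triangle_ineq[of "w - c" v] by (fastforce simp: algebra_simps)
  qed (use alpha_bounds[OF b] l \<delta> \<open>0 \<le> B\<close> in \<open>auto simp: alpha_def\<close>)
  also have "2 * (1 - l) * (B + \<delta>') \<le> 2 * (B + \<delta>') / r * (\<delta>' - \<delta>)"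
  proof -
    have "1 - l = (\<delta>' - \<delta>) / (r + (\<delta>' - \<delta>))" using \<omega>(2) \<delta> by (simp add: l_def field_simps)
    also have "\<dots> \<le> (\<delta>' - \<delta>) / r" using \<omega>(2) \<delta> by (intro divide_left_mono) auto
    finally have "(1 - l) * (2 * (B + \<delta>')) \<le> (\<delta>' - \<delta>) / r * (2 * (B + \<delta>'))"
      using \<open>0 \<le> B\<close> \<delta> by (intro mult_right_mono) auto
    then show ?thesis by (simp only: mult_ac times_divide_eq_left times_divide_eq_right)
  qed
  finally show ?thesis by simp
qed

lemma dist_f_alpha_bounds:
  assumes \<omega>: "convex \<omega>" "0 < r" "ball c r \<subseteq> \<omega>" "\<And>w. w \<in> \<omega> \<Longrightarrow> norm (w - c) \<le> B"
    and b: "\<bar>b\<bar> \<le> 1" and \<delta>: "0 \<le> \<delta>" "\<delta> < \<delta>'" "\<delta>' \<le> 1"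
  shows "dist_f (alpha b \<omega> \<delta>') x y \<le> dist_f (alpha b \<omega> \<delta>) x y"
    and "dist_f (alpha b \<omega> \<delta>) x y \<le> dist_f (alpha b \<omega> \<delta>') x y + 2 * (B + 1) / r * \<bar>\<delta>' - \<delta>\<bar>"
proof -
  show "dist_f (alpha b \<omega> \<delta>') x y \<le> dist_f (alpha b \<omega> \<delta>) x y"
    using b \<delta> by (intro dist_f_mono alpha_antimono alpha_bounds) auto
  have "2 * (B + \<delta>') / r \<le> 2 * (B + 1) / r"
    using \<delta> \<omega>(2) by (simp add: divide_right_mono)
  then have "2 * (B + \<delta>') / r * (\<delta>' - \<delta>) \<le> 2 * (B + 1) / r * (\<delta>' - \<delta>)"
    by (rule mult_right_mono) (use \<delta> in simp)
  then have "2 * (B + \<delta>') / r * (\<delta>' - \<delta>) \<le> 2 * (B + 1) / r * \<bar>\<delta>' - \<delta>\<bar>"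
    using \<delta> by simp
  then show "dist_f (alpha b \<omega> \<delta>) x y \<le> dist_f (alpha b \<omega> \<delta>') x y + 2 * (B + 1) / r * \<bar>\<delta>' - \<delta>\<bar>"
    using dist_f_alpha_le[OF \<omega> b \<delta>(1,2), of x y] by linarith
qed

lemma match_cost_diff_le:
  assumes "\<And>u v. d' u v \<le> d u v" "\<And>u v. d u v \<le> d' u v + K"
  shows "\<bar>match_cost d k p n - match_cost d' k p n\<bar> \<le> K * real k"
proof -
  define P where "P = {\<sigma>. \<sigma> permutes {..<k}}"
  define cost where "cost e \<sigma> = (\<Sum>i<k. e (p i) (n (\<sigma> i)))" for e :: "R3 \<Rightarrow> R3 \<Rightarrow> real" and \<sigma>
  have match_cost: "match_cost e k p n = Min (cost e ` P)" for e
    unfolding match_cost_def cost_def P_def by (rule arg_cong[where f=Min]) blast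
  have P: "finite P" "P \<noteq> {}"
    unfolding P_def using finite_permutations[of "{..<k}"] permutes_id[of "{..<k}"] by blast+
  have cost: "cost d' \<sigma> \<le> cost d \<sigma>" "cost d \<sigma> \<le> cost d' \<sigma> + K * real k" for \<sigma>
    unfolding cost_def using sum_mono[of "{..<k}" "\<lambda>i. d (p i) (n (\<sigma> i))" "\<lambda>i. d' (p i) (n (\<sigma> i)) + K"]
    by (auto simp: sum.distrib assms mult.commute intro: sum_mono)
  have Min_cost_le: "Min (cost e ` P) \<le> cost e \<sigma>" if "\<sigma> \<in> P" for e \<sigma>
    using P that by simp
  have "Min (cost d' ` P) \<le> cost d \<sigma>" "Min (cost d ` P) - K * real k \<le> cost d' \<sigma>" if "\<sigma> \<in> P" for \<sigma>
    using Min_cost_le[OF that, of d] Min_cost_le[OF that, of d'] cost[of \<sigma>] by linarith+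
  then have "Min (cost d' ` P) \<le> Min (cost d ` P)" "Min (cost d ` P) - K * real k \<le> Min (cost d' ` P)"
    using P by (simp_all add: Min_ge_iff)
  then show ?thesis unfolding match_cost by linarith
qed

lemma delta0_le_one: "delta0 \<Omega> \<omega> \<le> 1"
  by (simp add: delta0_def power_int_minus)

theorem mainTheorem6:
  fixes \<Omega> \<omega> :: "R3 set" and b :: real
  assumes "open \<Omega>" "bounded \<Omega>" "convex \<Omega>" "smooth_boundary \<Omega>"
    and "open \<omega>" "bounded \<omega>" "strictly_convex \<omega>" "smooth_boundary \<omega>"
    and "closure \<omega> \<subseteq> \<Omega>"
    and "0 < b" "b < 1"
  shows "\<exists>C>0.
    (\<forall>\<delta> \<delta>' x y. 0 \<le> \<delta> \<and> \<delta> < \<delta>' \<and> \<delta>' \<le> delta0 \<Omega> \<omega> \<longrightarrow>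
        dist_f (alpha b \<omega> \<delta>') x y \<le> dist_f (alpha b \<omega> \<delta>) x y \<and>
        dist_f (alpha b \<omega> \<delta>) x y \<le> dist_f (alpha b \<omega> \<delta>') x y + C * \<bar>\<delta>' - \<delta>\<bar>) \<and>
    (\<forall>\<delta> \<delta>' k p n. 0 \<le> \<delta> \<and> \<delta> < \<delta>' \<and> \<delta>' \<le> delta0 \<Omega> \<omega> \<and>
        inj_on p {..<k} \<and> inj_on n {..<k} \<and> p ` {..<k} \<inter> n ` {..<k} = {} \<longrightarrow>
        \<bar>match_cost (dist_f (alpha b \<omega> \<delta>)) k p n - match_cost (dist_f (alpha b \<omega> \<delta>')) k p n\<bar>
          \<le> C * real k * \<bar>\<delta>' - \<delta>\<bar>)"
proof (cases "\<omega> = {}")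
  case True
  then have "alpha b \<omega> \<delta> = (\<lambda>_. 1)" for \<delta> by (auto simp: alpha_def enlarged_def)
  then show ?thesis by (intro exI[of _ 1]) simp
next
  case False
  then obtain c where "c \<in> \<omega>" by blast
  then obtain r where r: "0 < r" "ball c r \<subseteq> \<omega>" using \<open>open \<omega>\<close> open_contains_ball by blast
  obtain B where B: "\<And>w. w \<in> \<omega> \<Longrightarrow> norm (w - c) \<le> B"
    using \<open>bounded \<omega>\<close> bounded_any_center[of \<omega> c] by (auto simp: dist_norm norm_minus_commute)
  have "convex \<omega>" using \<open>strictly_convex \<omega>\<close> by (simp add: strictly_convex_def)
  have b: "\<bar>b\<bar> \<le> 1" using \<open>0 < b\<close> \<open>b < 1\<close> by simp
  define C where "C = 2 * (B + 1) / r"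
  have "0 \<le> B" using B[OF \<open>c \<in> \<omega>\<close>] by simp
  then have "0 < C" using r by (simp add: C_def)
  have dist_f_bounds: "dist_f (alpha b \<omega> \<delta>') x y \<le> dist_f (alpha b \<omega> \<delta>) x y"
    "dist_f (alpha b \<omega> \<delta>) x y \<le> dist_f (alpha b \<omega> \<delta>') x y + C * \<bar>\<delta>' - \<delta>\<bar>"
    if "0 \<le> \<delta>" "\<delta> < \<delta>'" "\<delta>' \<le> delta0 \<Omega> \<omega>" for \<delta> \<delta>' x y
    using dist_f_alpha_bounds[OF \<open>convex \<omega>\<close> r B b that(1,2) order_trans[OF that(3) delta0_le_one]]
    unfolding C_def by auto
  have match_cost_bound: "\<bar>match_cost (dist_f (alpha b \<omega> \<delta>)) k p n - match_cost (dist_f (alpha b \<omega> \<delta>')) k p n\<bar>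
      \<le> C * real k * \<bar>\<delta>' - \<delta>\<bar>" if "0 \<le> \<delta>" "\<delta> < \<delta>'" "\<delta>' \<le> delta0 \<Omega> \<omega>" for \<delta> \<delta>' k p n
    using match_cost_diff_le[OF dist_f_bounds[OF that]] by (simp add: mult_ac)
  show ?thesis
    by (intro exI[of _ C] conjI allI impI \<open>0 < C\<close>; elim conjE; rule dist_f_bounds match_cost_bound)
qed

end
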